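(* Assume every $(\sigma,\delta)$-conjugacy class of $K$ is $(\sigma,\delta)$-algebraic. Then for every irreducible $P(T)\in K[T;\sigma,\delta]$ of degree $>1$, the skew rational function $P(T)^{-1}$ is defined at every $a\in K$.
   Context: Let $K$ be a skew field, $K^*=K\setminus\{0\}$, $\sigma\colon K\to K$ a ring endomorphism and $\delta\colon K\to K$ a $\sigma$-derivation. $K[T;\sigma,\delta]$ is the skew polynomial ring with $Ta=\sigma(a)T+\delta(a)$. The $(\sigma,\delta)$-action of $K^*$ on $K$ is ${}^{b}a=\sigma(b)ab^{-1}+\delta(b)b^{-1}$; $\Delta(a)=\{{}^{b}a:b\in K^*\}$ is the $(\sigma,\delta)$-conjugacy class of $a$. For $P\in K[T;\sigma,\delta]$ and $a\in K$, $P(a)$ is the unique element of $K$ with $P(T)-P(a)\in K[T;\sigma,\delta](T-a)$. A conjugacy class $\Delta(a)$ is $(\sigma,\delta)$-algebraic if there is a nonzero $P\in K[T;\sigma,\delta]$ with $P(c)=0$ for all $c\in\Delta(a)$. For a set $Z$ with a $K^*$-action, the skew product of functions $Z\to K$ is $(f\diamond g)(z)=f({}^{g(z)}z)g(z)$ if $g(z)\neq0$, $0$ otherwise; $f$ is skew invertible if some $g$ satisfies $f\diamond g=g\diamond f=1$. $K(T;\sigma,\delta)$ is the division ring of left fractions of $K[T;\sigma,\delta]$; each $f$ has a unique minimal representation $P(T)^{-1}Q(T)$ with $P$ monic of least degree; $f$ is defined at $a$ if the function $\Delta(a)\to K$, $c\mapsto P(c)$, is skew invertible. *)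

theory Defs
  imports "HOL-Computational_Algebra.Polynomial"
begin

text \<open>Skew polynomials K[T;sigma,delta] over a skew field K (type class division_ring)
are represented by their coefficient sequences, stored in the library type 'a poly
(used only as a container of coefficients; the library product on 'a poly is NOT used).
The skew multiplication is defined from the rule T a = sigma(a) T + delta(a).\<close>

definition ring_endo :: "('a::division_ring \<Rightarrow> 'a) \<Rightarrow> bool" where
  "ring_endo \<sigma> \<longleftrightarrow> (\<forall>a b. \<sigma> (a + b) = \<sigma> a + \<sigma> b) \<and> (\<forall>a b. \<sigma> (a * b) = \<sigma> a * \<sigma> b) \<and> \<sigma> 1 = 1"

definition sigma_derivation :: "('a::division_ring \<Rightarrow> 'a) \<Rightarrow> ('a \<Rightarrow> 'a) \<Rightarrow> bool" where
  "sigma_derivation \<sigma> \<delta> \<longleftrightarrow> (\<forall>a b. \<delta> (a + b) = \<delta> a + \<delta> b) \<and>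
      (\<forall>a b. \<delta> (a * b) = \<sigma> a * \<delta> b + \<delta> a * b)"

text \<open>Left multiplication by T: T (sum a_i T^i) = sum (sigma(a_i) T^(i+1) + delta(a_i) T^i).\<close>
definition tmul :: "('a::division_ring \<Rightarrow> 'a) \<Rightarrow> ('a \<Rightarrow> 'a) \<Rightarrow> 'a poly \<Rightarrow> 'a poly" where
  "tmul \<sigma> \<delta> p = pCons 0 (map_poly \<sigma> p) + map_poly \<delta> p"

definition lscal :: "'a::division_ring \<Rightarrow> 'a poly \<Rightarrow> 'a poly" where
  "lscal c p = map_poly (\<lambda>x. c * x) p"

definition skew_mult :: "('a::division_ring \<Rightarrow> 'a) \<Rightarrow> ('a \<Rightarrow> 'a) \<Rightarrow> 'a poly \<Rightarrow> 'a poly \<Rightarrow> 'a poly" where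
  "skew_mult \<sigma> \<delta> p q = (\<Sum>i\<le>degree p. lscal (coeff p i) ((tmul \<sigma> \<delta> ^^ i) q))"

definition skew_eval :: "('a::division_ring \<Rightarrow> 'a) \<Rightarrow> ('a \<Rightarrow> 'a) \<Rightarrow> 'a poly \<Rightarrow> 'a \<Rightarrow> 'a" where
  "skew_eval \<sigma> \<delta> P a = (THE r. \<exists>Q. P - [:r:] = skew_mult \<sigma> \<delta> Q [:- a, 1:])"

definition skew_unit :: "('a::division_ring \<Rightarrow> 'a) \<Rightarrow> ('a \<Rightarrow> 'a) \<Rightarrow> 'a poly \<Rightarrow> bool" where
  "skew_unit \<sigma> \<delta> A \<longleftrightarrow> (\<exists>B. skew_mult \<sigma> \<delta> A B = [:1:] \<and> skew_mult \<sigma> \<delta> B A = [:1:])"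

definition skew_irreducible :: "('a::division_ring \<Rightarrow> 'a) \<Rightarrow> ('a \<Rightarrow> 'a) \<Rightarrow> 'a poly \<Rightarrow> bool" where
  "skew_irreducible \<sigma> \<delta> P \<longleftrightarrow> P \<noteq> 0 \<and> \<not> skew_unit \<sigma> \<delta> P \<and>
     (\<forall>A B. P = skew_mult \<sigma> \<delta> A B \<longrightarrow> skew_unit \<sigma> \<delta> A \<or> skew_unit \<sigma> \<delta> B)"

definition sd_act :: "('a::division_ring \<Rightarrow> 'a) \<Rightarrow> ('a \<Rightarrow> 'a) \<Rightarrow> 'a \<Rightarrow> 'a \<Rightarrow> 'a" where
  "sd_act \<sigma> \<delta> b a = \<sigma> b * a * inverse b + \<delta> b * inverse b"

definition conj_class :: "('a::division_ring \<Rightarrow> 'a) \<Rightarrow> ('a \<Rightarrow> 'a) \<Rightarrow> 'a \<Rightarrow> 'a set" where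
  "conj_class \<sigma> \<delta> a = {sd_act \<sigma> \<delta> b a | b. b \<noteq> 0}"

definition sd_algebraic_class :: "('a::division_ring \<Rightarrow> 'a) \<Rightarrow> ('a \<Rightarrow> 'a) \<Rightarrow> 'a \<Rightarrow> bool" where
  "sd_algebraic_class \<sigma> \<delta> a \<longleftrightarrow>
     (\<exists>P. P \<noteq> 0 \<and> (\<forall>c\<in>conj_class \<sigma> \<delta> a. skew_eval \<sigma> \<delta> P c = 0))"

text \<open>Skew product of functions Z -> K (values outside Z irrelevant), and skew invertibility on Z.\<close>
definition skew_prod :: "('a::division_ring \<Rightarrow> 'a) \<Rightarrow> ('a \<Rightarrow> 'a) \<Rightarrow> ('a \<Rightarrow> 'a) \<Rightarrow> ('a \<Rightarrow> 'a) \<Rightarrow> 'a \<Rightarrow> 'a" where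
  "skew_prod \<sigma> \<delta> f g z = (if g z \<noteq> 0 then f (sd_act \<sigma> \<delta> (g z) z) * g z else 0)"

definition skew_invertible_on :: "('a::division_ring \<Rightarrow> 'a) \<Rightarrow> ('a \<Rightarrow> 'a) \<Rightarrow> 'a set \<Rightarrow> ('a \<Rightarrow> 'a) \<Rightarrow> bool" where
  "skew_invertible_on \<sigma> \<delta> Z f \<longleftrightarrow>
     (\<exists>g. \<forall>z\<in>Z. skew_prod \<sigma> \<delta> f g z = 1 \<and> skew_prod \<sigma> \<delta> g f z = 1)"

text \<open>Equality of left fractions P^{-1}Q = R^{-1}S in K(T;sigma,delta) (left Ore localisation):
there are nonzero U, V with U P = V R and U Q = V S.\<close>
definition frac_eq :: "('a::division_ring \<Rightarrow> 'a) \<Rightarrow> ('a \<Rightarrow> 'a) \<Rightarrow> 'a poly \<times> 'a poly \<Rightarrow> 'a poly \<times> 'a poly \<Rightarrow> bool" where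
  "frac_eq \<sigma> \<delta> PQ RS \<longleftrightarrow> (\<exists>U V. U \<noteq> 0 \<and> V \<noteq> 0 \<and>
      skew_mult \<sigma> \<delta> U (fst PQ) = skew_mult \<sigma> \<delta> V (fst RS) \<and>
      skew_mult \<sigma> \<delta> U (snd PQ) = skew_mult \<sigma> \<delta> V (snd RS))"

definition minimal_rep :: "('a::division_ring \<Rightarrow> 'a) \<Rightarrow> ('a \<Rightarrow> 'a) \<Rightarrow> 'a poly \<times> 'a poly \<Rightarrow> 'a poly \<times> 'a poly \<Rightarrow> bool" where
  "minimal_rep \<sigma> \<delta> PQ RS \<longleftrightarrow> lead_coeff (fst RS) = 1 \<and> frac_eq \<sigma> \<delta> RS PQ \<and>
     (\<forall>R' S'. lead_coeff R' = 1 \<and> frac_eq \<sigma> \<delta> (R', S') PQ \<longrightarrow> degree (fst RS) \<le> degree R')"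

definition frac_defined_at :: "('a::division_ring \<Rightarrow> 'a) \<Rightarrow> ('a \<Rightarrow> 'a) \<Rightarrow> 'a poly \<times> 'a poly \<Rightarrow> 'a \<Rightarrow> bool" where
  "frac_defined_at \<sigma> \<delta> PQ a \<longleftrightarrow> (\<exists>RS. minimal_rep \<sigma> \<delta> PQ RS) \<and>
     (\<forall>RS. minimal_rep \<sigma> \<delta> PQ RS \<longrightarrow>
        skew_invertible_on \<sigma> \<delta> (conj_class \<sigma> \<delta> a) (\<lambda>c. skew_eval \<sigma> \<delta> (fst RS) c))"

end

theory Submission
  imports Defs
begin

text \<open>
  Fix \<open>a\<close> and let \<open>T\<^sub>a(x) = \<sigma>(x) a + \<delta>(x)\<close>. Substituting \<open>T\<^sub>a\<close> into a skew polynomial \<open>F\<close> gives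
  an additive map \<open>L\<^sub>a(F)\<close> of \<open>K\<close> with \<open>L\<^sub>a(F G) = L\<^sub>a(F) \<circ> L\<^sub>a(G)\<close> and
  \<open>L\<^sub>a(F)(b) = F(\<^sup>ba) b\<close>; in particular \<open>F(a) = L\<^sub>a(F)(1)\<close>. Every \<open>L\<^sub>a(F)\<close> is right linear over
  the division ring \<open>C(a) = {c. \<sigma>(c) a + \<delta>(c) = a c}\<close>, whose nonzero elements are the
  stabiliser of \<open>a\<close>. Splitting off one root \<open>\<^sup>ba\<close> at a time shows that the kernel of
  \<open>L\<^sub>a(F)\<close> has right \<open>C(a)\<close>-dimension at most \<open>deg F\<close>. As \<open>\<Delta>(a)\<close> is algebraic, some
  \<open>M \<noteq> 0\<close> has \<open>L\<^sub>a(M) = 0\<close>, so \<open>K\<close> itself is finite dimensional over \<open>C(a)\<close>.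

  An irreducible \<open>P\<close> of degree \<open>> 1\<close> has no roots, so \<open>L\<^sub>a(P)\<close> is injective, hence bijective
  by finite dimensionality. Through \<open>L\<^sub>a(P)(b) = P(\<^sup>ba) b\<close> this makes \<open>z \<mapsto> \<^sup>P\<^sup>(\<^sup>z\<^sup>)z\<close> a
  permutation of \<open>\<Delta>(a)\<close>, which is what skew invertibility of \<open>c \<mapsto> P(c)\<close> on \<open>\<Delta>(a)\<close> amounts
  to. Finally, the minimal representation of \<open>P\<^sup>-\<^sup>1\<close> has as denominator a left scalar
  multiple of \<open>P\<close>.
\<close>

lemma coeff_lscal [simp]: "coeff (lscal c p) n = c * coeff p n"
  unfolding lscal_def by (simp add: coeff_map_poly)

lemma lscal_0_left [simp]: "lscal 0 p = 0"
  by (rule poly_eqI) simp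

lemma lscal_1_left [simp]: "lscal 1 p = p"
  by (rule poly_eqI) simp

lemma lscal_0_right [simp]: "lscal c 0 = 0"
  by (rule poly_eqI) simp

lemma lscal_add_left: "lscal (c + d) p = lscal c p + lscal d p"
  by (rule poly_eqI) (simp add: distrib_right)

lemma lscal_add_right: "lscal c (p + q) = lscal c p + lscal c q"
  by (rule poly_eqI) (simp add: distrib_left)

lemma lscal_lscal: "lscal c (lscal d p) = lscal (c * d) p"
  by (rule poly_eqI) (simp add: mult.assoc)

lemma lscal_sum: "lscal c (sum f A) = (\<Sum>x\<in>A. lscal c (f x))"
  by (rule poly_eqI) (simp add: coeff_sum sum_distrib_left)

lemma lscal_const: "lscal c [:x:] = [:c * x:]"
  by (rule poly_eqI) (simp add: coeff_pCons')

lemma degree_lscal_le: "degree (lscal c p) \<le> degree p"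
  by (rule degree_le) (simp add: coeff_eq_0)

lemma degree_lscal: "c \<noteq> 0 \<Longrightarrow> degree (lscal c p) = degree p"
  by (cases "p = 0") (auto intro!: antisym degree_lscal_le le_degree)

lemma const_sum: "[:sum f A:] = (\<Sum>x\<in>A. [:f x:])"
  by (rule poly_eqI) (auto simp: coeff_sum coeff_pCons')

lemma sum_atMost_degree:
  assumes "\<And>i. i > degree p \<Longrightarrow> f i = 0" "degree p \<le> N"
  shows "(\<Sum>i\<le>N. f i) = (\<Sum>i\<le>degree p. f i)"
  by (rule sum.mono_neutral_right) (use assms in auto)

locale skew_poly_ring =
  fixes \<sigma> \<delta> :: "'a::division_ring \<Rightarrow> 'a"
  assumes ring_endo: "ring_endo \<sigma>" and sigma_derivation: "sigma_derivation \<sigma> \<delta>"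
begin

lemma sigma_add: "\<sigma> (x + y) = \<sigma> x + \<sigma> y"
  using ring_endo unfolding ring_endo_def by blast

lemma sigma_mult: "\<sigma> (x * y) = \<sigma> x * \<sigma> y"
  using ring_endo unfolding ring_endo_def by blast

lemma sigma_one [simp]: "\<sigma> 1 = 1"
  using ring_endo unfolding ring_endo_def by blast

lemma sigma_zero [simp]: "\<sigma> 0 = 0"
  using sigma_add[of 0 0] by simp

lemma sigma_minus: "\<sigma> (- x) = - \<sigma> x"
  by (metis add.right_inverse minus_unique sigma_add sigma_zero)

lemma sigma_eq_0D: "\<sigma> x = 0 \<Longrightarrow> x = 0"
  by (metis mult_zero_left right_inverse sigma_mult sigma_one zero_neq_one)

lemma funpow_sigma_eq_0D: "(\<sigma> ^^ n) x = 0 \<Longrightarrow> x = 0"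
  by (induction n) (auto dest: sigma_eq_0D)

lemma delta_add: "\<delta> (x + y) = \<delta> x + \<delta> y"
  using sigma_derivation unfolding sigma_derivation_def by blast

lemma delta_mult: "\<delta> (x * y) = \<sigma> x * \<delta> y + \<delta> x * y"
  using sigma_derivation unfolding sigma_derivation_def by blast

lemma delta_zero [simp]: "\<delta> 0 = 0"
  using delta_add[of 0 0] by simp

lemma delta_one [simp]: "\<delta> 1 = 0"
  using delta_mult[of 1 1] by simp

lemma delta_minus: "\<delta> (- x) = - \<delta> x"
  by (metis add.right_inverse minus_unique delta_add delta_zero)

abbreviation T_mult :: "'a poly \<Rightarrow> 'a poly" where
  "T_mult \<equiv> tmul \<sigma> \<delta>"

abbreviation skew_times :: "'a poly \<Rightarrow> 'a poly \<Rightarrow> 'a poly" (infixl \<open>\<star>\<close> 70) where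
  "p \<star> q \<equiv> skew_mult \<sigma> \<delta> p q"

lemma coeff_tmul:
  "coeff (T_mult p) n = (if n = 0 then 0 else \<sigma> (coeff p (n - 1))) + \<delta> (coeff p n)"
  unfolding tmul_def by (simp add: coeff_map_poly coeff_pCons')

lemma tmul_0 [simp]: "T_mult 0 = 0"
  unfolding tmul_def by simp

lemma tmul_add: "T_mult (p + q) = T_mult p + T_mult q"
  by (rule poly_eqI) (simp add: coeff_tmul sigma_add delta_add algebra_simps)

lemma tmul_lscal: "T_mult (lscal c p) = lscal (\<sigma> c) (T_mult p) + lscal (\<delta> c) p"
  by (rule poly_eqI) (simp add: coeff_tmul sigma_mult delta_mult algebra_simps)

lemma tmul_sum: "T_mult (sum f A) = (\<Sum>x\<in>A. T_mult (f x))"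
  by (induction A rule: infinite_finite_induct) (simp_all add: tmul_add)

lemma tmul_const: "T_mult [:r:] = [:\<delta> r, \<sigma> r:]"
  by (rule poly_eqI) (simp add: coeff_tmul coeff_pCons')

lemma degree_tmul_le: "degree (T_mult p) \<le> degree p + 1"
  by (rule degree_le) (simp add: coeff_tmul coeff_eq_0)

lemma funpow_tmul_add: "(T_mult ^^ i) (p + q) = (T_mult ^^ i) p + (T_mult ^^ i) q"
  by (induction i) (simp_all add: tmul_add)

lemma funpow_tmul_0 [simp]: "(T_mult ^^ i) 0 = 0"
  by (induction i) simp_all

lemma funpow_tmul_1: "(T_mult ^^ i) [:1:] = monom 1 i"
  by (induction i) (auto intro!: poly_eqI simp: coeff_tmul monom_0)

lemma degree_funpow_tmul_le: "degree ((T_mult ^^ i) p) \<le> degree p + i"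
  by (induction i) (use degree_tmul_le order_trans in fastforce)+

lemma coeff_funpow_tmul_top:
  "coeff ((T_mult ^^ i) p) (degree p + i) = (\<sigma> ^^ i) (lead_coeff p)"
proof (induction i)
  case (Suc i)
  have "coeff ((T_mult ^^ i) p) (degree p + Suc i) = 0"
    using degree_funpow_tmul_le[of i p] by (intro coeff_eq_0) simp
  with Suc show ?case by (simp add: coeff_tmul)
qed simp

lemma skew_mult_eq_sum:
  "degree p \<le> N \<Longrightarrow> p \<star> q = (\<Sum>i\<le>N. lscal (coeff p i) ((T_mult ^^ i) q))"
  unfolding skew_mult_def by (rule sym, rule sum_atMost_degree) (auto simp: coeff_eq_0)

lemma skew_mult_0_left [simp]: "0 \<star> q = 0"
  unfolding skew_mult_def by simp

lemma skew_mult_0_right [simp]: "p \<star> 0 = 0"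
  unfolding skew_mult_def by simp

lemma skew_mult_const_left: "[:c:] \<star> p = lscal c p"
  unfolding skew_mult_def by simp

lemma skew_mult_1_right [simp]: "p \<star> [:1:] = p"
proof (rule poly_eqI)
  fix n
  have "coeff p i * coeff (monom 1 i) n = (if i = n then coeff p n else 0)" for i
    by simp
  then show "coeff (p \<star> [:1:]) n = coeff p n"
    by (cases "n \<le> degree p") (auto simp: skew_mult_def funpow_tmul_1 coeff_sum coeff_eq_0)
qed

lemma skew_mult_add_left: "(p + q) \<star> r = p \<star> r + q \<star> r"
proof -
  let ?N = "max (degree p) (degree q)"
  have "(p + q) \<star> r = (\<Sum>i\<le>?N. lscal (coeff (p + q) i) ((T_mult ^^ i) r))"
    by (rule skew_mult_eq_sum) (rule degree_add_le_max)
  also have "\<dots> = p \<star> r + q \<star> r"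
    by (simp add: lscal_add_left sum.distrib skew_mult_eq_sum[of p ?N] skew_mult_eq_sum[of q ?N])
  finally show ?thesis .
qed

lemma skew_mult_add_right: "p \<star> (q + r) = p \<star> q + p \<star> r"
  unfolding skew_mult_def by (simp add: funpow_tmul_add lscal_add_right sum.distrib)

lemma skew_mult_diff_left: "(p - q) \<star> r = p \<star> r - q \<star> r"
  by (metis add_diff_cancel eq_diff_eq skew_mult_add_left)

lemma skew_mult_diff_right: "p \<star> (q - r) = p \<star> q - p \<star> r"
  by (metis add_diff_cancel eq_diff_eq skew_mult_add_right)

lemma skew_mult_lscal_left: "lscal c p \<star> r = lscal c (p \<star> r)"
proof -
  have "lscal c p \<star> r = (\<Sum>i\<le>degree p. lscal (coeff (lscal c p) i) ((T_mult ^^ i) r))"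
    by (rule skew_mult_eq_sum) (rule degree_lscal_le)
  then show ?thesis
    by (simp add: skew_mult_def lscal_sum lscal_lscal)
qed

lemma skew_mult_sum_left: "sum f A \<star> r = (\<Sum>x\<in>A. f x \<star> r)"
  by (induction A rule: infinite_finite_induct) (simp_all add: skew_mult_add_left)

lemma tmul_skew_mult: "T_mult (p \<star> q) = T_mult p \<star> q"
proof -
  let ?N = "degree p"
  let ?c = "\<lambda>i. lscal (if i = 0 then 0 else \<sigma> (coeff p (i - 1))) ((T_mult ^^ i) q)"
  let ?d = "\<lambda>i. lscal (\<delta> (coeff p i)) ((T_mult ^^ i) q)"
  have "T_mult (p \<star> q) =
      (\<Sum>i\<le>?N. lscal (\<sigma> (coeff p i)) ((T_mult ^^ Suc i) q)) + (\<Sum>i\<le>?N. ?d i)"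
    unfolding skew_mult_def by (simp add: tmul_sum tmul_lscal sum.distrib)
  also have "\<dots> = (\<Sum>i\<le>Suc ?N. ?c i) + (\<Sum>i\<le>Suc ?N. ?d i)"
    by (subst sum.atMost_Suc_shift) (simp add: coeff_eq_0)
  also have "\<dots> = (\<Sum>i\<le>Suc ?N. lscal (coeff (T_mult p) i) ((T_mult ^^ i) q))"
    by (simp add: sum.distrib[symmetric] lscal_add_left coeff_tmul)
  also have "\<dots> = T_mult p \<star> q"
    by (rule skew_mult_eq_sum[symmetric]) (use degree_tmul_le[of p] in simp)
  finally show ?thesis .
qed

lemma skew_mult_assoc: "p \<star> q \<star> r = p \<star> (q \<star> r)"
proof -
  have funpow_tmul_skew_mult: "(T_mult ^^ i) (q \<star> r) = (T_mult ^^ i) q \<star> r" for i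
    by (induction i) (simp_all add: tmul_skew_mult)
  have "p \<star> q \<star> r = (\<Sum>i\<le>degree p. lscal (coeff p i) ((T_mult ^^ i) q) \<star> r)"
    unfolding skew_mult_def[of _ _ p q] by (rule skew_mult_sum_left)
  also have "\<dots> = (\<Sum>i\<le>degree p. lscal (coeff p i) ((T_mult ^^ i) (q \<star> r)))"
    by (simp add: skew_mult_lscal_left funpow_tmul_skew_mult)
  also have "\<dots> = p \<star> (q \<star> r)"
    unfolding skew_mult_def ..
  finally show ?thesis .
qed

lemma coeff_skew_mult_high:
  assumes "degree p + degree q \<le> k"
  shows "coeff (p \<star> q) k =
    (if k = degree p + degree q then lead_coeff p * (\<sigma> ^^ degree p) (lead_coeff q) else 0)"
proof -
  let ?n = "degree p"
  let ?f = "\<lambda>i. coeff p i * coeff ((T_mult ^^ i) q) k"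
  have "?f i = 0" if "i < ?n" for i
    using degree_funpow_tmul_le[of i q] that assms by (simp add: coeff_eq_0)
  then have "(\<Sum>i\<in>insert ?n {..<?n}. ?f i) = ?f ?n"
    by (simp add: sum.neutral del: mult_eq_0_iff)
  moreover have "insert ?n {..<?n} = {..?n}"
    by auto
  ultimately have "coeff (p \<star> q) k = ?f ?n"
    by (simp add: skew_mult_def coeff_sum)
  also have "\<dots> =
      (if k = degree p + degree q then lead_coeff p * (\<sigma> ^^ degree p) (lead_coeff q) else 0)"
    using coeff_funpow_tmul_top[of ?n q] degree_funpow_tmul_le[of ?n q] assms
    by (auto simp: add.commute coeff_eq_0)
  finally show ?thesis .
qed

lemma degree_skew_mult:
  assumes "p \<noteq> 0" "q \<noteq> 0"
  shows "degree (p \<star> q) = degree p + degree q"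
proof (rule antisym)
  show "degree (p \<star> q) \<le> degree p + degree q"
    by (rule degree_le) (auto simp: coeff_skew_mult_high)
  have "lead_coeff p * (\<sigma> ^^ degree p) (lead_coeff q) \<noteq> 0"
    using assms funpow_sigma_eq_0D[of "degree p" "lead_coeff q"] by auto
  then show "degree p + degree q \<le> degree (p \<star> q)"
    by (intro le_degree) (simp add: coeff_skew_mult_high)
qed

lemma skew_mult_eq_0_iff: "p \<star> q = 0 \<longleftrightarrow> p = 0 \<or> q = 0"
  using coeff_skew_mult_high[of p q] funpow_sigma_eq_0D[of "degree p" "lead_coeff q"] by force

lemma skew_mult_left_cancel: "p \<noteq> 0 \<Longrightarrow> p \<star> q = p \<star> r \<Longrightarrow> q = r"
  using skew_mult_diff_right[of p q r] skew_mult_eq_0_iff[of p "q - r"] by simp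

lemma degree_skew_unit: "skew_unit \<sigma> \<delta> A \<Longrightarrow> degree A = 0"
  unfolding skew_unit_def using degree_skew_mult skew_mult_eq_0_iff
  by (metis add_is_0 degree_pCons_0 one_neq_zero pCons_eq_0_iff)

subsection \<open>The pseudo-linear map \<open>T\<^sub>a\<close>\<close>

text \<open>\<open>pl_map a\<close> is \<open>T\<^sub>a\<close> and \<open>pl_eval a F\<close> is \<open>L\<^sub>a(F) = F(T\<^sub>a)\<close>.\<close>

definition pl_map :: "'a \<Rightarrow> 'a \<Rightarrow> 'a" where
  "pl_map a x = \<sigma> x * a + \<delta> x"

definition pl_eval :: "'a \<Rightarrow> 'a poly \<Rightarrow> 'a \<Rightarrow> 'a" where
  "pl_eval a F b = (\<Sum>i\<le>degree F. coeff F i * (pl_map a ^^ i) b)"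

lemma pl_map_0 [simp]: "pl_map a 0 = 0"
  unfolding pl_map_def by simp

lemma pl_map_add: "pl_map a (x + y) = pl_map a x + pl_map a y"
  unfolding pl_map_def by (simp add: sigma_add delta_add algebra_simps)

lemma pl_map_mult: "pl_map a (c * x) = \<sigma> c * pl_map a x + \<delta> c * x"
  unfolding pl_map_def by (simp add: sigma_mult delta_mult algebra_simps)

lemma pl_map_sum: "pl_map a (sum f A) = (\<Sum>x\<in>A. pl_map a (f x))"
  by (induction A rule: infinite_finite_induct) (simp_all add: pl_map_add)

lemma funpow_pl_map_add: "(pl_map a ^^ i) (x + y) = (pl_map a ^^ i) x + (pl_map a ^^ i) y"
  by (induction i) (simp_all add: pl_map_add)

lemma funpow_pl_map_0 [simp]: "(pl_map a ^^ i) 0 = 0"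
  by (induction i) simp_all

lemma pl_eval_eq_sum:
  "degree F \<le> N \<Longrightarrow> pl_eval a F b = (\<Sum>i\<le>N. coeff F i * (pl_map a ^^ i) b)"
  unfolding pl_eval_def by (rule sym, rule sum_atMost_degree) (auto simp: coeff_eq_0)

lemma pl_eval_0_left [simp]: "pl_eval a 0 b = 0"
  unfolding pl_eval_def by simp

lemma pl_eval_linear: "pl_eval a [:-z, 1:] b = pl_map a b - z * b"
  unfolding pl_eval_def by simp

lemma pl_eval_add_left: "pl_eval a (F + G) b = pl_eval a F b + pl_eval a G b"
proof -
  let ?N = "max (degree F) (degree G)"
  have "pl_eval a (F + G) b = (\<Sum>i\<le>?N. coeff (F + G) i * (pl_map a ^^ i) b)"
    by (rule pl_eval_eq_sum) (rule degree_add_le_max)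
  also have "\<dots> = pl_eval a F b + pl_eval a G b"
    by (simp add: distrib_right sum.distrib pl_eval_eq_sum[of F ?N] pl_eval_eq_sum[of G ?N])
  finally show ?thesis .
qed

lemma pl_eval_lscal: "pl_eval a (lscal c F) b = c * pl_eval a F b"
proof -
  have "pl_eval a (lscal c F) b = (\<Sum>i\<le>degree F. coeff (lscal c F) i * (pl_map a ^^ i) b)"
    by (rule pl_eval_eq_sum) (rule degree_lscal_le)
  then show ?thesis
    by (simp add: pl_eval_def sum_distrib_left mult.assoc)
qed

lemma pl_eval_sum_left: "pl_eval a (sum f A) b = (\<Sum>x\<in>A. pl_eval a (f x) b)"
  by (induction A rule: infinite_finite_induct) (simp_all add: pl_eval_add_left)

lemma pl_eval_add_right: "pl_eval a F (x + y) = pl_eval a F x + pl_eval a F y"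
  unfolding pl_eval_def by (simp add: funpow_pl_map_add distrib_left sum.distrib)

lemma pl_eval_0_right [simp]: "pl_eval a F 0 = 0"
  unfolding pl_eval_def by simp

lemma pl_eval_diff_right: "pl_eval a F (x - y) = pl_eval a F x - pl_eval a F y"
  by (metis add_diff_cancel eq_diff_eq pl_eval_add_right)

lemma pl_eval_sum_right: "pl_eval a F (sum f A) = (\<Sum>x\<in>A. pl_eval a F (f x))"
  by (induction A rule: infinite_finite_induct) (simp_all add: pl_eval_add_right)

lemma pl_eval_tmul: "pl_eval a (T_mult F) b = pl_map a (pl_eval a F b)"
proof -
  let ?N = "degree F"
  let ?c = "\<lambda>i. (if i = 0 then 0 else \<sigma> (coeff F (i - 1))) * (pl_map a ^^ i) b"
  let ?d = "\<lambda>i. \<delta> (coeff F i) * (pl_map a ^^ i) b"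
  have "pl_map a (pl_eval a F b) =
      (\<Sum>i\<le>?N. \<sigma> (coeff F i) * (pl_map a ^^ Suc i) b) + (\<Sum>i\<le>?N. ?d i)"
    unfolding pl_eval_def by (simp add: pl_map_sum pl_map_mult sum.distrib)
  also have "\<dots> = (\<Sum>i\<le>Suc ?N. ?c i) + (\<Sum>i\<le>Suc ?N. ?d i)"
    by (subst sum.atMost_Suc_shift) (simp add: coeff_eq_0)
  also have "\<dots> = (\<Sum>i\<le>Suc ?N. coeff (T_mult F) i * (pl_map a ^^ i) b)"
    by (simp add: sum.distrib[symmetric] distrib_right coeff_tmul)
  also have "\<dots> = pl_eval a (T_mult F) b"
    by (rule pl_eval_eq_sum[symmetric]) (use degree_tmul_le[of F] in simp)
  finally show ?thesis by simp
qed

lemma pl_eval_skew_mult: "pl_eval a (G \<star> H) b = pl_eval a G (pl_eval a H b)"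
proof -
  have "pl_eval a ((T_mult ^^ i) H) b = (pl_map a ^^ i) (pl_eval a H b)" for i
    by (induction i) (simp_all add: pl_eval_tmul)
  then show ?thesis
    by (simp add: skew_mult_def pl_eval_def[of a G] pl_eval_sum_left pl_eval_lscal)
qed

lemma skew_division_by_linear: "\<exists>Q. F = Q \<star> [:-z, 1:] + [:pl_eval z F 1:]"
proof -
  let ?L = "[:-z, 1:]"
  have "\<exists>Q. (T_mult ^^ i) [:1:] = Q \<star> ?L + [:(pl_map z ^^ i) 1:]" for i
  proof (induction i)
    case 0
    show ?case by (rule exI[of _ 0]) simp
  next
    case (Suc i)
    let ?r = "(pl_map z ^^ i) 1"
    from Suc obtain Q where Q: "(T_mult ^^ i) [:1:] = Q \<star> ?L + [:?r:]" ..
    have "[:\<delta> ?r, \<sigma> ?r:] = [:\<sigma> ?r:] \<star> ?L + [:pl_map z ?r:]"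
      by (rule poly_eqI) (auto simp: skew_mult_const_left pl_map_def coeff_pCons')
    then have "(T_mult ^^ Suc i) [:1:] = (T_mult Q + [:\<sigma> ?r:]) \<star> ?L + [:(pl_map z ^^ Suc i) 1:]"
      by (simp add: Q tmul_add tmul_const tmul_skew_mult skew_mult_add_left)
    then show ?case ..
  qed
  then obtain Qs where Qs: "\<And>i. (T_mult ^^ i) [:1:] = Qs i \<star> ?L + [:(pl_map z ^^ i) 1:]"
    by metis
  have "F = (\<Sum>i\<le>degree F. lscal (coeff F i) ((T_mult ^^ i) [:1:]))"
    using skew_mult_1_right[of F] unfolding skew_mult_def by (rule sym)
  also have "\<dots> = (\<Sum>i\<le>degree F. lscal (coeff F i) (Qs i) \<star> ?L + [:coeff F i * (pl_map z ^^ i) 1:])"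
    by (simp add: Qs lscal_add_right skew_mult_lscal_left lscal_const)
  also have "\<dots> = (\<Sum>i\<le>degree F. lscal (coeff F i) (Qs i)) \<star> ?L + [:pl_eval z F 1:]"
    by (simp add: sum.distrib skew_mult_sum_left const_sum pl_eval_def)
  finally show ?thesis ..
qed

lemma remainder_by_linear_unique:
  assumes "F = Q \<star> [:-z, 1:] + [:r:]" "F = Q' \<star> [:-z, 1:] + [:r':]"
  shows "r = r'"
proof -
  have "Q \<star> [:-z, 1:] = F - [:r:]"
    using assms(1) by simp
  moreover have "Q' \<star> [:-z, 1:] = F - [:r':]"
    using assms(2) by simp
  ultimately have eq: "(Q - Q') \<star> [:-z, 1:] = [:r' - r:]"
    by (simp add: skew_mult_diff_left)
  have "Q - Q' = 0"
  proof (rule ccontr)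
    assume "Q - Q' \<noteq> 0"
    then have "degree ((Q - Q') \<star> [:-z, 1:]) = degree (Q - Q') + 1"
      by (simp add: degree_skew_mult)
    with eq show False by simp
  qed
  with eq show ?thesis by simp
qed

lemma skew_eval_eq_pl_eval: "skew_eval \<sigma> \<delta> F z = pl_eval z F 1"
proof -
  obtain Q where Q: "F = Q \<star> [:-z, 1:] + [:pl_eval z F 1:]"
    using skew_division_by_linear by blast
  show ?thesis
    unfolding skew_eval_def
  proof (rule the_equality)
    show "\<exists>Q. F - [:pl_eval z F 1:] = Q \<star> [:- z, 1:]"
      using Q by (metis add_diff_cancel)
  next
    fix r assume "\<exists>Q'. F - [:r:] = Q' \<star> [:- z, 1:]"
    then show "r = pl_eval z F 1"
      using Q remainder_by_linear_unique by (metis diff_add_cancel)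
  qed
qed

lemma root_imp_linear_right_factor: "skew_eval \<sigma> \<delta> F z = 0 \<Longrightarrow> \<exists>Q. F = Q \<star> [:-z, 1:]"
  using skew_division_by_linear[of F z] by (simp add: skew_eval_eq_pl_eval)

lemma irreducible_no_root:
  assumes irr: "skew_irreducible \<sigma> \<delta> P" and deg: "degree P > 1"
  shows "skew_eval \<sigma> \<delta> P z \<noteq> 0"
proof
  assume "skew_eval \<sigma> \<delta> P z = 0"
  then obtain Q where Q: "P = Q \<star> [:-z, 1:]"
    using root_imp_linear_right_factor by blast
  with irr have "Q \<noteq> 0"
    unfolding skew_irreducible_def by auto
  with Q deg have "degree Q \<noteq> 0"
    by (simp add: degree_skew_mult)
  moreover have "skew_unit \<sigma> \<delta> Q \<or> skew_unit \<sigma> \<delta> [:-z, 1:]"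
    using irr Q unfolding skew_irreducible_def by blast
  ultimately show False
    using degree_skew_unit by fastforce
qed

definition centralizer :: "'a \<Rightarrow> 'a set" where
  "centralizer a = {c. \<sigma> c * a + \<delta> c = a * c}"

lemma sd_act_1 [simp]: "sd_act \<sigma> \<delta> 1 a = a"
  unfolding sd_act_def by simp

lemma sd_act_eq_pl_map: "b \<noteq> 0 \<Longrightarrow> sd_act \<sigma> \<delta> b a = pl_map a b * inverse b"
  unfolding sd_act_def pl_map_def by (simp add: distrib_right)

lemma sd_act_mult:
  assumes "b \<noteq> 0" "c \<noteq> 0"
  shows "sd_act \<sigma> \<delta> b (sd_act \<sigma> \<delta> c a) = sd_act \<sigma> \<delta> (b * c) a"
proof -
  have cancel: "c * (inverse c * x) = x" for x
    using assms(2) by (metis mult.assoc right_inverse mult_1_left)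
  have "sd_act \<sigma> \<delta> (b * c) a = \<sigma> b * \<sigma> c * a * (inverse c * inverse b)
      + (\<sigma> b * \<delta> c + \<delta> b * c) * (inverse c * inverse b)"
    unfolding sd_act_def using assms
    by (simp add: sigma_mult delta_mult nonzero_inverse_mult_distrib)
  also have "\<dots> = sd_act \<sigma> \<delta> b (sd_act \<sigma> \<delta> c a)"
    unfolding sd_act_def by (simp add: algebra_simps cancel)
  finally show ?thesis
    by simp
qed

lemma sd_act_inverse:
  "b \<noteq> 0 \<Longrightarrow> sd_act \<sigma> \<delta> (inverse b) (sd_act \<sigma> \<delta> b a) = a"
  by (simp add: sd_act_mult)

lemma sd_act_in_conj_class: "b \<noteq> 0 \<Longrightarrow> sd_act \<sigma> \<delta> b a \<in> conj_class \<sigma> \<delta> a"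
  unfolding conj_class_def by blast

lemma conj_classE:
  assumes "w \<in> conj_class \<sigma> \<delta> a"
  obtains b where "b \<noteq> 0" "w = sd_act \<sigma> \<delta> b a"
  using assms unfolding conj_class_def by blast

lemma pl_eval_eq_skew_eval:
  "b \<noteq> 0 \<Longrightarrow> pl_eval a F b = skew_eval \<sigma> \<delta> F (sd_act \<sigma> \<delta> b a) * b"
proof -
  assume b: "b \<noteq> 0"
  let ?z = "sd_act \<sigma> \<delta> b a"
  have "(pl_map a ^^ i) b = (pl_map ?z ^^ i) 1 * b" for i
  proof (induction i)
    case (Suc i)
    let ?x = "(pl_map ?z ^^ i) 1"
    have zb: "?z * b = pl_map a b"
      using b by (simp add: sd_act_eq_pl_map mult.assoc)
    have "pl_map a (?x * b) = pl_map ?z ?x * b"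
      unfolding pl_map_mult zb[symmetric] by (simp add: pl_map_def distrib_right mult.assoc)
    with Suc show ?case by simp
  qed simp
  then show ?thesis
    by (simp add: pl_eval_def skew_eval_eq_pl_eval sum_distrib_right mult.assoc)
qed

lemma centralizer_iff_stabilizer: "c \<noteq> 0 \<Longrightarrow> c \<in> centralizer a \<longleftrightarrow> sd_act \<sigma> \<delta> c a = a"
  unfolding centralizer_def
  by (auto simp: sd_act_eq_pl_map pl_map_def mult.assoc nonzero_divide_eq_eq
      divide_inverse[symmetric])

lemma zero_in_centralizer [simp]: "0 \<in> centralizer a"
  unfolding centralizer_def by simp

lemma centralizer_mult: "x \<in> centralizer a \<Longrightarrow> y \<in> centralizer a \<Longrightarrow> x * y \<in> centralizer a"
  by (cases "x = 0 \<or> y = 0") (auto simp: centralizer_iff_stabilizer sd_act_mult[symmetric])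

lemma centralizer_inverse: "x \<in> centralizer a \<Longrightarrow> inverse x \<in> centralizer a"
  by (metis centralizer_iff_stabilizer inverse_nonzero_iff_nonzero sd_act_inverse
      zero_in_centralizer)

lemma centralizer_uminus: "x \<in> centralizer a \<Longrightarrow> - x \<in> centralizer a"
  unfolding centralizer_def by (simp add: sigma_minus delta_minus algebra_simps)

lemma stabilizer_quotient:
  assumes "x \<noteq> 0" "y \<noteq> 0" "sd_act \<sigma> \<delta> x a = sd_act \<sigma> \<delta> y a"
  shows "inverse y * x \<in> centralizer a"
  using assms sd_act_inverse[of y a]
  by (simp add: centralizer_iff_stabilizer sd_act_mult[symmetric])

lemma pl_eval_right_linear:
  assumes "c \<in> centralizer a"
  shows "pl_eval a F (x * c) = pl_eval a F x * c"
proof -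
  have "pl_map a (x * c) = pl_map a x * c" for x
  proof -
    have "pl_map a (x * c) = \<sigma> x * (\<sigma> c * a + \<delta> c) + \<delta> x * c"
      unfolding pl_map_def by (simp add: sigma_mult delta_mult algebra_simps)
    also have "\<dots> = pl_map a x * c"
      using assms unfolding centralizer_def pl_map_def by (simp add: algebra_simps)
    finally show ?thesis .
  qed
  then have "(pl_map a ^^ i) (x * c) = (pl_map a ^^ i) x * c" for i
    by (induction i) simp_all
  then show ?thesis
    by (simp add: pl_eval_def sum_distrib_right mult.assoc)
qed

subsection \<open>Right linear independence over the centralizer\<close>

definition centralizer_indep :: "'a \<Rightarrow> nat \<Rightarrow> (nat \<Rightarrow> 'a) \<Rightarrow> bool" where
  "centralizer_indep a k b \<longleftrightarrow>
     (\<forall>\<gamma>. (\<forall>i<k. \<gamma> i \<in> centralizer a) \<and> (\<Sum>i<k. b i * \<gamma> i) = 0 \<longrightarrow> (\<forall>i<k. \<gamma> i = 0))"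

lemma centralizer_indepD:
  "centralizer_indep a k b \<Longrightarrow> (\<And>i. i < k \<Longrightarrow> \<gamma> i \<in> centralizer a) \<Longrightarrow>
    (\<Sum>i<k. b i * \<gamma> i) = 0 \<Longrightarrow> i < k \<Longrightarrow> \<gamma> i = 0"
  unfolding centralizer_indep_def by blast

lemma centralizer_indep_nonzero:
  assumes "centralizer_indep a k b" "i < k"
  shows "b i \<noteq> 0"
proof
  assume "b i = 0"
  let ?\<gamma> = "\<lambda>j. if j = i then (1::'a) else 0"
  have "?\<gamma> j \<in> centralizer a" for j
    by (simp add: centralizer_def)
  moreover have "(\<Sum>j<k. b j * ?\<gamma> j) = 0"
    using \<open>b i = 0\<close> by (simp add: if_distrib cong: if_cong)
  ultimately show False
    using centralizer_indepD[OF assms(1) _ _ assms(2), of ?\<gamma>] by simp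
qed

text \<open>The kernel of \<open>L\<^sub>a(T - \<^sup>b\<^sup>0a)\<close> is \<open>b\<^sub>0 C(a)\<close>, so applying it to an independent
  family \<open>b\<^sub>0, \<dots>, b\<^sub>k\<close> leaves the independent family \<open>L\<^sub>a(T - \<^sup>b\<^sup>0a)(b\<^sub>1), \<dots>\<close>.\<close>

lemma centralizer_indep_pl_eval_linear:
  assumes ind: "centralizer_indep a (Suc k) b"
  shows "centralizer_indep a k (\<lambda>i. pl_eval a [:- sd_act \<sigma> \<delta> (b 0) a, 1:] (b (Suc i)))"
  unfolding centralizer_indep_def
proof (rule allI, rule impI)
  fix \<gamma> assume h: "(\<forall>i<k. \<gamma> i \<in> centralizer a) \<and>
    (\<Sum>i<k. pl_eval a [:- sd_act \<sigma> \<delta> (b 0) a, 1:] (b (Suc i)) * \<gamma> i) = 0"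
  have b0: "b 0 \<noteq> 0"
    using centralizer_indep_nonzero[OF ind] by simp
  define x where "x = (\<Sum>i<k. b (Suc i) * \<gamma> i)"
  have "pl_eval a [:- sd_act \<sigma> \<delta> (b 0) a, 1:] x = 0"
    using h by (simp add: x_def pl_eval_sum_right pl_eval_right_linear)
  then have x_act: "sd_act \<sigma> \<delta> x a = sd_act \<sigma> \<delta> (b 0) a" if "x \<noteq> 0"
    using that by (simp add: pl_eval_linear sd_act_eq_pl_map mult.assoc)
  obtain g where g: "g \<in> centralizer a" "x = b 0 * g"
  proof (cases "x = 0")
    case True
    then show ?thesis
      using that[of 0] by simp
  next
    case False
    then have "inverse (b 0) * x \<in> centralizer a"
      using stabilizer_quotient[OF False b0] x_act by simp
    then show ?thesis
      using that b0 by (simp flip: mult.assoc)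
  qed
  define \<gamma>' where "\<gamma>' i = (if i = 0 then - g else \<gamma> (i - 1))" for i
  have "(\<Sum>i<Suc k. b i * \<gamma>' i) = - (b 0 * g) + x"
    unfolding x_def \<gamma>'_def by (subst sum.lessThan_Suc_shift) simp
  moreover have "\<gamma>' i \<in> centralizer a" if "i < Suc k" for i
    using h g that by (auto simp: \<gamma>'_def centralizer_uminus)
  ultimately have "\<gamma>' (Suc i) = 0" if "i < k" for i
    using centralizer_indepD[OF ind] that g by simp
  then show "\<forall>i<k. \<gamma> i = 0"
    by (simp add: \<gamma>'_def)
qed

lemma kernel_dim_le_degree:
  "F \<noteq> 0 \<Longrightarrow> centralizer_indep a k b \<Longrightarrow> (\<forall>i<k. pl_eval a F (b i) = 0) \<Longrightarrow> k \<le> degree F"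
proof (induction k arbitrary: F b)
  case (Suc k)
  let ?z = "sd_act \<sigma> \<delta> (b 0) a"
  have b0: "b 0 \<noteq> 0"
    using centralizer_indep_nonzero[OF Suc.prems(2)] by simp
  then have "skew_eval \<sigma> \<delta> F ?z = 0"
    using Suc.prems(3) pl_eval_eq_skew_eval[OF b0, of a F] by simp
  then obtain G where G: "F = G \<star> [:-?z, 1:]"
    using root_imp_linear_right_factor by blast
  with Suc.prems(1) have "G \<noteq> 0"
    by auto
  moreover note centralizer_indep_pl_eval_linear[OF Suc.prems(2)]
  moreover have "\<forall>i<k. pl_eval a G (pl_eval a [:-?z, 1:] (b (Suc i))) = 0"
    using Suc.prems(3) by (simp add: G pl_eval_skew_mult)
  ultimately have "k \<le> degree G"
    by (rule Suc.IH)
  with G \<open>G \<noteq> 0\<close> show ?case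
    by (simp add: degree_skew_mult)
qed simp

lemma maximal_centralizer_indep_spans:
  assumes ind: "centralizer_indep a n \<beta>" and max: "\<not> centralizer_indep a (Suc n) (\<beta>(n := v))"
  shows "\<exists>\<gamma>. (\<forall>i<n. \<gamma> i \<in> centralizer a) \<and> v = (\<Sum>i<n. \<beta> i * \<gamma> i)"
proof -
  obtain g where g: "\<forall>i<Suc n. g i \<in> centralizer a" "(\<Sum>i<n. \<beta> i * g i) + v * g n = 0"
      "\<exists>j<Suc n. g j \<noteq> 0"
    using max unfolding centralizer_indep_def by auto
  have gn: "g n \<noteq> 0"
  proof
    assume "g n = 0"
    then have "\<forall>i<n. g i = 0"
      using ind g(1,2) unfolding centralizer_indep_def by auto
    with g(3) \<open>g n = 0\<close> show False
      using less_Suc_eq by auto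
  qed
  define \<gamma> where "\<gamma> i = - g i * inverse (g n)" for i
  have "v * g n = - (\<Sum>i<n. \<beta> i * g i)"
    using g(2) by (simp add: eq_neg_iff_add_eq_0 add.commute)
  then have "v = - (\<Sum>i<n. \<beta> i * g i) * inverse (g n)"
    using gn by (metis mult.assoc right_inverse mult_1_right)
  also have "\<dots> = (\<Sum>i<n. \<beta> i * \<gamma> i)"
    by (simp add: \<gamma>_def sum_distrib_right mult.assoc sum_negf)
  moreover have "\<forall>i<n. \<gamma> i \<in> centralizer a"
    using g(1) by (auto simp: \<gamma>_def intro!: centralizer_mult centralizer_uminus centralizer_inverse)
  ultimately show ?thesis
    by blast
qed

lemma exists_maximal_centralizer_indep:
  assumes "M \<noteq> 0" "\<forall>b. pl_eval a M b = 0"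
  obtains n \<beta> where "centralizer_indep a n \<beta>" "\<And>b. \<not> centralizer_indep a (Suc n) b"
proof -
  define S where "S = {k. \<exists>b. centralizer_indep a k b}"
  have "S \<subseteq> {..degree M}"
    unfolding S_def using kernel_dim_le_degree[OF assms(1)] assms(2) by auto
  then have fin: "finite S"
    by (rule finite_subset) simp
  have "0 \<in> S"
    unfolding S_def centralizer_indep_def by simp
  then have "Max S \<in> S"
    using fin by (intro Max_in) auto
  moreover have "Suc (Max S) \<notin> S"
    using Max_ge[OF fin, of "Suc (Max S)"] by auto
  ultimately show thesis
    using that unfolding S_def by blast
qed

lemma centralizer_indep_pl_eval:
  assumes "centralizer_indep a n \<beta>" and inj: "\<forall>b. b \<noteq> 0 \<longrightarrow> pl_eval a R b \<noteq> 0"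
  shows "centralizer_indep a n (\<lambda>i. pl_eval a R (\<beta> i))"
  unfolding centralizer_indep_def
proof (rule allI, rule impI)
  fix \<gamma> assume h: "(\<forall>i<n. \<gamma> i \<in> centralizer a) \<and> (\<Sum>i<n. pl_eval a R (\<beta> i) * \<gamma> i) = 0"
  then have "pl_eval a R (\<Sum>i<n. \<beta> i * \<gamma> i) = 0"
    by (simp add: pl_eval_sum_right pl_eval_right_linear)
  with inj have "(\<Sum>i<n. \<beta> i * \<gamma> i) = 0"
    by blast
  with assms(1) h show "\<forall>i<n. \<gamma> i = 0"
    unfolding centralizer_indep_def by blast
qed

text \<open>An injective right \<open>C(a)\<close>-linear map of a finite-dimensional space is onto: it maps a
  maximal independent family to one.\<close>

lemma pl_eval_surj:
  assumes "M \<noteq> 0" "\<forall>b. pl_eval a M b = 0"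
    and inj: "\<forall>b. b \<noteq> 0 \<longrightarrow> pl_eval a R b \<noteq> 0"
  shows "\<exists>b. pl_eval a R b = w"
proof -
  obtain n \<beta> where \<beta>: "centralizer_indep a n \<beta>" and max: "\<And>b. \<not> centralizer_indep a (Suc n) b"
    using exists_maximal_centralizer_indep[OF assms(1,2)] by blast
  obtain \<gamma> where "\<forall>i<n. \<gamma> i \<in> centralizer a" "w = (\<Sum>i<n. pl_eval a R (\<beta> i) * \<gamma> i)"
    using maximal_centralizer_indep_spans[OF centralizer_indep_pl_eval[OF \<beta> inj] max] by blast
  then have "w = pl_eval a R (\<Sum>i<n. \<beta> i * \<gamma> i)"
    by (simp add: pl_eval_sum_right pl_eval_right_linear)
  then show ?thesis
    by blast
qed

lemma skew_invertible_on_if_bij: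
  assumes nz: "\<forall>z\<in>Z. f z \<noteq> 0" and bij: "bij_betw (\<lambda>z. sd_act \<sigma> \<delta> (f z) z) Z Z"
  shows "skew_invertible_on \<sigma> \<delta> Z f"
proof -
  let ?\<phi> = "\<lambda>z. sd_act \<sigma> \<delta> (f z) z"
  define g where "g w = inverse (f (inv_into Z ?\<phi> w))" for w
  have "skew_prod \<sigma> \<delta> f g z = 1 \<and> skew_prod \<sigma> \<delta> g f z = 1" if z: "z \<in> Z" for z
  proof
    let ?y = "inv_into Z ?\<phi> z"
    have y: "?y \<in> Z" "?\<phi> ?y = z"
      using bij z by (auto intro: bij_betw_inv_into_right bij_betw_apply bij_betw_inv_into)
    then have "sd_act \<sigma> \<delta> (g z) z = ?y"
      using sd_act_inverse[of "f ?y" ?y] nz by (simp add: g_def)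
    with y nz show "skew_prod \<sigma> \<delta> f g z = 1"
      by (simp add: skew_prod_def g_def)
    have "inv_into Z ?\<phi> (?\<phi> z) = z"
      using bij z by (rule bij_betw_inv_into_left)
    with z nz show "skew_prod \<sigma> \<delta> g f z = 1"
      by (simp add: skew_prod_def g_def)
  qed
  then show ?thesis
    unfolding skew_invertible_on_def by blast
qed

lemma orbit_eq_if_pl_eval_orbit_eq:
  assumes inj: "\<forall>b. b \<noteq> 0 \<longrightarrow> pl_eval a R b \<noteq> 0" and b: "b1 \<noteq> 0" "b2 \<noteq> 0"
    and eq: "sd_act \<sigma> \<delta> (pl_eval a R b1) a = sd_act \<sigma> \<delta> (pl_eval a R b2) a"
  shows "sd_act \<sigma> \<delta> b1 a = sd_act \<sigma> \<delta> b2 a"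
proof -
  define \<gamma> where "\<gamma> = inverse (pl_eval a R b2) * pl_eval a R b1"
  have \<gamma>: "\<gamma> \<in> centralizer a" "\<gamma> \<noteq> 0"
    using stabilizer_quotient inj b eq by (simp_all add: \<gamma>_def)
  have "pl_eval a R b1 = pl_eval a R b2 * \<gamma>"
    using b inj by (simp add: \<gamma>_def flip: mult.assoc)
  then have "pl_eval a R (b1 - b2 * \<gamma>) = 0"
    using \<gamma> by (simp add: pl_eval_diff_right pl_eval_right_linear)
  then have "b1 = b2 * \<gamma>"
    using inj by force
  then have "sd_act \<sigma> \<delta> b1 a = sd_act \<sigma> \<delta> b2 (sd_act \<sigma> \<delta> \<gamma> a)"
    using b \<gamma> by (simp add: sd_act_mult)
  also have "\<dots> = sd_act \<sigma> \<delta> b2 a"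
    using \<gamma> centralizer_iff_stabilizer by simp
  finally show ?thesis .
qed

text \<open>The map \<open>z \<mapsto> \<^sup>R\<^sup>(\<^sup>z\<^sup>)z\<close> on \<open>\<Delta>(a)\<close> is \<open>L\<^sub>a(R)\<close> read through the orbit map
  \<open>b \<mapsto> \<^sup>ba\<close>, whose fibres are the cosets \<open>b C(a)\<^sup>*\<close>.\<close>

lemma sd_act_skew_eval_orbit:
  assumes "b \<noteq> 0" "skew_eval \<sigma> \<delta> R (sd_act \<sigma> \<delta> b a) \<noteq> 0"
  shows "sd_act \<sigma> \<delta> (skew_eval \<sigma> \<delta> R (sd_act \<sigma> \<delta> b a)) (sd_act \<sigma> \<delta> b a) =
    sd_act \<sigma> \<delta> (pl_eval a R b) a"
  using assms by (simp add: pl_eval_eq_skew_eval sd_act_mult)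

lemma bij_betw_conj_class:
  assumes surj: "\<forall>w. \<exists>b. pl_eval a R b = w"
    and nz: "\<forall>c\<in>conj_class \<sigma> \<delta> a. skew_eval \<sigma> \<delta> R c \<noteq> 0"
  shows "bij_betw (\<lambda>z. sd_act \<sigma> \<delta> (skew_eval \<sigma> \<delta> R z) z) (conj_class \<sigma> \<delta> a) (conj_class \<sigma> \<delta> a)"
proof -
  let ?D = "conj_class \<sigma> \<delta> a"
  let ?\<phi> = "\<lambda>z. sd_act \<sigma> \<delta> (skew_eval \<sigma> \<delta> R z) z"
  have L_inj: "\<forall>b. b \<noteq> 0 \<longrightarrow> pl_eval a R b \<noteq> 0"
    using nz sd_act_in_conj_class by (simp add: pl_eval_eq_skew_eval)
  have \<phi>_orbit: "?\<phi> (sd_act \<sigma> \<delta> b a) = sd_act \<sigma> \<delta> (pl_eval a R b) a" if "b \<noteq> 0" for b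
    using that nz sd_act_in_conj_class by (simp add: sd_act_skew_eval_orbit)
  show ?thesis
  proof (rule bij_betw_imageI)
    show "inj_on ?\<phi> ?D"
    proof (rule inj_onI)
      fix z1 z2 assume z1: "z1 \<in> ?D" and z2: "z2 \<in> ?D" and eq: "?\<phi> z1 = ?\<phi> z2"
      obtain b1 b2 where b: "b1 \<noteq> 0" "z1 = sd_act \<sigma> \<delta> b1 a" "b2 \<noteq> 0" "z2 = sd_act \<sigma> \<delta> b2 a"
        using z1 z2 by (elim conj_classE)
      with eq have "sd_act \<sigma> \<delta> (pl_eval a R b1) a = sd_act \<sigma> \<delta> (pl_eval a R b2) a"
        by (simp add: \<phi>_orbit)
      then show "z1 = z2"
        using orbit_eq_if_pl_eval_orbit_eq[OF L_inj b(1,3)] b(2,4) by simp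
    qed
    show "?\<phi> ` ?D = ?D"
    proof (intro equalityI subsetI)
      fix w assume "w \<in> ?\<phi> ` ?D"
      then obtain z where z: "z \<in> ?D" "w = ?\<phi> z"
        by blast
      obtain b where "b \<noteq> 0" "z = sd_act \<sigma> \<delta> b a"
        using z(1) by (rule conj_classE)
      with z(2) L_inj show "w \<in> ?D"
        by (simp add: \<phi>_orbit sd_act_in_conj_class)
    next
      fix w assume "w \<in> ?D"
      then obtain b' where b': "b' \<noteq> 0" "w = sd_act \<sigma> \<delta> b' a"
        by (rule conj_classE)
      obtain b where b: "pl_eval a R b = b'" "b \<noteq> 0"
        using surj b'(1) by fastforce
      with b'(2) have "?\<phi> (sd_act \<sigma> \<delta> b a) = w"
        by (simp add: \<phi>_orbit)
      with b(2) show "w \<in> ?\<phi> ` ?D"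
        using sd_act_in_conj_class by blast
    qed
  qed
qed

lemma skew_invertible_on_conj_class:
  assumes alg: "sd_algebraic_class \<sigma> \<delta> a"
    and nz: "\<forall>c\<in>conj_class \<sigma> \<delta> a. skew_eval \<sigma> \<delta> R c \<noteq> 0"
  shows "skew_invertible_on \<sigma> \<delta> (conj_class \<sigma> \<delta> a) (skew_eval \<sigma> \<delta> R)"
proof -
  obtain M where M: "M \<noteq> 0" "\<forall>c\<in>conj_class \<sigma> \<delta> a. skew_eval \<sigma> \<delta> M c = 0"
    using alg unfolding sd_algebraic_class_def by blast
  then have "\<forall>b. pl_eval a M b = 0"
    by (metis pl_eval_0_right pl_eval_eq_skew_eval sd_act_in_conj_class mult_zero_left)
  moreover have "\<forall>b. b \<noteq> 0 \<longrightarrow> pl_eval a R b \<noteq> 0"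
    using nz sd_act_in_conj_class by (simp add: pl_eval_eq_skew_eval)
  ultimately have "\<forall>w. \<exists>b. pl_eval a R b = w"
    using pl_eval_surj[OF M(1)] by blast
  then have "bij_betw (\<lambda>z. sd_act \<sigma> \<delta> (skew_eval \<sigma> \<delta> R z) z) (conj_class \<sigma> \<delta> a) (conj_class \<sigma> \<delta> a)"
    using nz by (rule bij_betw_conj_class)
  with nz show ?thesis
    by (rule skew_invertible_on_if_bij)
qed

subsection \<open>The minimal representation of \<open>P\<^sup>-\<^sup>1\<close>\<close>

lemma frac_eq_inverseD:
  assumes "frac_eq \<sigma> \<delta> (R, S) (P, [:1:])"
  shows "R = S \<star> P"
proof -
  obtain U V where UV: "U \<noteq> 0" "U \<star> R = V \<star> P" "U \<star> S = V"
    using assms unfolding frac_eq_def by auto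
  then have "U \<star> R = U \<star> (S \<star> P)"
    by (simp flip: skew_mult_assoc)
  with UV(1) show ?thesis
    by (rule skew_mult_left_cancel)
qed

lemma minimal_rep_inverse:
  assumes "P \<noteq> 0"
  shows "minimal_rep \<sigma> \<delta> (P, [:1:]) (lscal (inverse (lead_coeff P)) P, [:inverse (lead_coeff P):])"
proof -
  let ?c = "inverse (lead_coeff P)"
  have deg: "degree (lscal ?c P) = degree P"
    using assms by (simp add: degree_lscal)
  moreover have "frac_eq \<sigma> \<delta> (lscal ?c P, [:?c:]) (P, [:1:])"
    unfolding frac_eq_def
    by (rule exI[of _ "[:1:]"], rule exI[of _ "[:?c:]"]) (simp add: skew_mult_const_left assms)
  moreover have "degree P \<le> degree R'" if "lead_coeff R' = 1" "frac_eq \<sigma> \<delta> (R', S') (P, [:1:])"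
    for R' S'
  proof -
    have "R' = S' \<star> P"
      using that(2) by (rule frac_eq_inverseD)
    moreover from this have "S' \<noteq> 0"
      using that(1) by auto
    ultimately show ?thesis
      using assms by (simp add: degree_skew_mult)
  qed
  ultimately show ?thesis
    unfolding minimal_rep_def using assms by (auto simp: deg)
qed

lemma minimal_rep_inverseD:
  assumes "P \<noteq> 0" "minimal_rep \<sigma> \<delta> (P, [:1:]) (R, S)"
  obtains s where "s \<noteq> 0" "R = lscal s P"
proof -
  let ?c = "inverse (lead_coeff P)"
  have "degree R \<le> degree (lscal ?c P)"
    using assms(2) minimal_rep_inverse[OF assms(1)] unfolding minimal_rep_def fst_conv by blast
  then have deg: "degree R \<le> degree P"
    using assms(1) by (simp add: degree_lscal)
  have R: "R = S \<star> P"
    using assms(2) unfolding minimal_rep_def by (auto intro: frac_eq_inverseD)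
  moreover have "R \<noteq> 0"
    using assms(2) unfolding minimal_rep_def by auto
  ultimately have "S \<noteq> 0"
    by auto
  with R deg assms(1) have "degree S = 0"
    by (simp add: degree_skew_mult)
  then obtain s where "S = [:s:]"
    by (rule degree_eq_zeroE)
  with R \<open>S \<noteq> 0\<close> show thesis
    using that by (simp add: skew_mult_const_left)
qed

lemma inverse_irreducible_defined_at:
  assumes alg: "sd_algebraic_class \<sigma> \<delta> a"
    and irr: "skew_irreducible \<sigma> \<delta> P" and deg: "degree P > 1"
  shows "frac_defined_at \<sigma> \<delta> (P, [:1:]) a"
proof -
  have P: "P \<noteq> 0"
    using irr unfolding skew_irreducible_def by blast
  have "skew_invertible_on \<sigma> \<delta> (conj_class \<sigma> \<delta> a) (skew_eval \<sigma> \<delta> R)"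
    if min: "minimal_rep \<sigma> \<delta> (P, [:1:]) (R, S)" for R S
  proof -
    obtain s where "s \<noteq> 0" "R = lscal s P"
      using minimal_rep_inverseD[OF P min] .
    then have "skew_eval \<sigma> \<delta> R c \<noteq> 0" for c
      using irreducible_no_root[OF irr deg] by (simp add: skew_eval_eq_pl_eval pl_eval_lscal)
    then show ?thesis
      using alg by (simp add: skew_invertible_on_conj_class)
  qed
  then show ?thesis
    unfolding frac_defined_at_def using minimal_rep_inverse[OF P] by fastforce
qed

end

theorem corollary3p5:
  fixes \<sigma> \<delta> :: "'a::division_ring \<Rightarrow> 'a" and P :: "'a poly"
  assumes "ring_endo \<sigma>"
    and "sigma_derivation \<sigma> \<delta>"
    and "\<forall>b. sd_algebraic_class \<sigma> \<delta> b"
    and "skew_irreducible \<sigma> \<delta> P"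
    and "degree P > 1"
  shows "\<forall>a. frac_defined_at \<sigma> \<delta> (P, [:1:]) a"
proof -
  interpret skew_poly_ring \<sigma> \<delta>
    using assms(1,2) by unfold_locales
  show ?thesis
    using inverse_irreducible_defined_at assms(3-5) by blast
qed

end
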